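(* Let $X$ be a Banach space over $\mathbb K\in\{\mathbb R,\mathbb C\}$, $(S,\Sigma,\mu)$ a measure space, and $f,g:S\to X$ strongly measurable functions such that for each $x^*\in X^*$ one has $|\langle g,x^*\rangle|\le|\langle f,x^*\rangle|$ $\mu$-a.e. Then there exists a $\Sigma$-measurable function $a:S\to\mathbb K$ with $\|a\|_\infty\le1$ and $g=af$ $\mu$-a.e. *)

theory Defs
  imports "HOL-Analysis.Analysis"
begin

definition strongly_measurable :: "'s measure \<Rightarrow> ('s \<Rightarrow> 'a::real_normed_vector) \<Rightarrow> bool" where
  "strongly_measurable M f \<longleftrightarrow>
     (\<exists>s::nat \<Rightarrow> 's \<Rightarrow> 'a. (\<forall>n. simple_function M (s n)) \<and>
        (\<forall>x\<in>space M. (\<lambda>n. s n x) \<longlonglongrightarrow> f x))"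

text \<open>A complex Banach space is encoded as a real Banach space (type class banach)
  together with a complex scalar multiplication extending the real one and
  compatible with the norm.\<close>
definition complex_scaling :: "(complex \<Rightarrow> 'a::real_normed_vector \<Rightarrow> 'a) \<Rightarrow> bool" where
  "complex_scaling cs \<longleftrightarrow>
     (\<forall>r x. cs (complex_of_real r) x = r *\<^sub>R x) \<and>
     (\<forall>a b x. cs (a * b) x = cs a (cs b x)) \<and>
     (\<forall>a b x. cs (a + b) x = cs a x + cs b x) \<and>
     (\<forall>a x y. cs a (x + y) = cs a x + cs a y) \<and>
     (\<forall>a x. norm (cs a x) = cmod a * norm x)"

definition complex_dual :: "(complex \<Rightarrow> 'a::real_normed_vector \<Rightarrow> 'a) \<Rightarrow> ('a \<Rightarrow> complex) \<Rightarrow> bool" where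
  "complex_dual cs \<phi> \<longleftrightarrow> bounded_linear \<phi> \<and> (\<forall>c x. \<phi> (cs c x) = c * \<phi> x)"

end

theory Submission
  imports Defs
begin

text \<open>
  By Hahn--Banach, for all vectors \<open>u\<close> and \<open>v\<close> there is a functional of norm at most one that
  vanishes on the line \<open>K u\<close> and whose value at \<open>v\<close> is the distance from \<open>v\<close> to that line.
  Strongly measurable functions take their values in the closure of a countable set \<open>D\<close>, so
  countably many such functionals, taken for \<open>u, v \<in> D\<close>, suffice, and the hypothesis holds for
  all of them simultaneously outside a null set. At such a point, approximating \<open>f\<close> and \<open>g\<close> from
  \<open>D\<close> shows that \<open>g\<close> lies on the closed line \<open>K f\<close>, and a functional that almost norms \<open>f\<close>
  bounds the coefficient by one. Finally the coefficient is a measurable function of the norms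
  of \<open>f\<close>, \<open>g\<close>, \<open>f + g\<close> (and \<open>f + i g\<close> in the complex case), by polarization.
\<close>

section \<open>Hahn--Banach for functionals dominated by the norm\<close>

text \<open>Partial linear functionals dominated by the norm, represented by their graphs so that
  Zorn's lemma can work with sets ordered by inclusion.\<close>
definition norm_dominated_graph :: "('a::real_normed_vector \<times> real) set \<Rightarrow> bool" where
  "norm_dominated_graph G \<longleftrightarrow>
     (\<forall>x r y s a b. (x, r) \<in> G \<longrightarrow> (y, s) \<in> G \<longrightarrow> (a *\<^sub>R x + b *\<^sub>R y, a * r + b * s) \<in> G) \<and>
     (\<forall>x r. (x, r) \<in> G \<longrightarrow> r \<le> norm x)"

lemma norm_dominated_graphD:
  assumes "norm_dominated_graph G"
  shows norm_dominated_graph_lincomb: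
      "(x, r) \<in> G \<Longrightarrow> (y, s) \<in> G \<Longrightarrow> (a *\<^sub>R x + b *\<^sub>R y, a * r + b * s) \<in> G"
    and norm_dominated_graph_le: "(x, r) \<in> G \<Longrightarrow> r \<le> norm x"
  using assms unfolding norm_dominated_graph_def by blast+

lemma norm_dominated_graph_scale:
  "norm_dominated_graph G \<Longrightarrow> (x, r) \<in> G \<Longrightarrow> (a *\<^sub>R x, a * r) \<in> G"
  using norm_dominated_graph_lincomb[of G x r x r a 0] by simp

lemma norm_dominated_graph_add:
  "norm_dominated_graph G \<Longrightarrow> (x, r) \<in> G \<Longrightarrow> (y, s) \<in> G \<Longrightarrow> (x + y, r + s) \<in> G"
  using norm_dominated_graph_lincomb[of G x r y s 1 1] by simp

lemma norm_dominated_graph_unique: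
  assumes G: "norm_dominated_graph G" and "(x, r) \<in> G" "(x, s) \<in> G"
  shows "r = s"
proof -
  have "(0, r - s) \<in> G" "(0, s - r) \<in> G"
    using norm_dominated_graph_lincomb[OF G, of x _ x _ 1 "-1"] assms by simp_all
  then show ?thesis
    using norm_dominated_graph_le[OF G, of 0 "r - s"] norm_dominated_graph_le[OF G, of 0 "s - r"]
    by simp
qed

lemma norm_dominated_graph_extension_slope:
  assumes G: "norm_dominated_graph G" and "G \<noteq> {}"
  obtains c where "\<And>x r. (x, r) \<in> G \<Longrightarrow> r - norm (x - v) \<le> c"
    and "\<And>x r. (x, r) \<in> G \<Longrightarrow> c \<le> norm (x + v) - r"
proof -
  define S where "S = {s - norm (y - v) | y s. (y, s) \<in> G}"
  have upper: "s - norm (y - v) \<le> norm (x + v) - r" if "(x, r) \<in> G" "(y, s) \<in> G" for x r y s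
  proof -
    have "r + s \<le> norm ((x + v) + (y - v))"
      using norm_dominated_graph_le[OF G norm_dominated_graph_add[OF G that]] by simp
    also have "\<dots> \<le> norm (x + v) + norm (y - v)" by (rule norm_triangle_ineq)
    finally show ?thesis by simp
  qed
  obtain x0 r0 where "(x0, r0) \<in> G" using \<open>G \<noteq> {}\<close> by auto
  then have "S \<noteq> {}" and "bdd_above S"
    using upper unfolding S_def bdd_above_def by blast+
  show ?thesis
  proof (rule that)
    show "r - norm (x - v) \<le> Sup S" if "(x, r) \<in> G" for x r
      using that \<open>bdd_above S\<close> unfolding S_def by (intro cSup_upper) blast+
    show "Sup S \<le> norm (x + v) - r" if "(x, r) \<in> G" for x r
      using that \<open>S \<noteq> {}\<close> upper unfolding S_def by (intro cSup_least) blast+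
  qed
qed

lemma extension_by_slope_le_norm:
  assumes G: "norm_dominated_graph G" and "(x, r) \<in> G"
    and lower: "\<And>x r. (x, r) \<in> G \<Longrightarrow> r - norm (x - v) \<le> c"
    and upper: "\<And>x r. (x, r) \<in> G \<Longrightarrow> c \<le> norm (x + v) - r"
  shows "r + t * c \<le> norm (x + t *\<^sub>R v)"
proof (cases t "0 :: real" rule: linorder_cases)
  case less
  have "(-1 / t) * r - norm ((-1 / t) *\<^sub>R x - v) \<le> c"
    using lower[OF norm_dominated_graph_scale[OF G \<open>(x, r) \<in> G\<close>]] .
  then have "r + t * c \<le> (- t) * norm ((-1 / t) *\<^sub>R x - v)"
    using less by (simp add: field_simps)
  also have "\<dots> = norm ((- t) *\<^sub>R ((-1 / t) *\<^sub>R x - v))" using less by simp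
  also have "(- t) *\<^sub>R ((-1 / t) *\<^sub>R x - v) = x + t *\<^sub>R v" using less by (simp add: algebra_simps)
  finally show ?thesis .
next
  case equal
  then show ?thesis using norm_dominated_graph_le[OF G \<open>(x, r) \<in> G\<close>] by simp
next
  case greater
  have "c \<le> norm ((1 / t) *\<^sub>R x + v) - (1 / t) * r"
    using upper[OF norm_dominated_graph_scale[OF G \<open>(x, r) \<in> G\<close>]] .
  then have "r + t * c \<le> t * norm ((1 / t) *\<^sub>R x + v)"
    using greater by (simp add: field_simps)
  also have "\<dots> = norm (t *\<^sub>R ((1 / t) *\<^sub>R x + v))" using greater by simp
  also have "t *\<^sub>R ((1 / t) *\<^sub>R x + v) = x + t *\<^sub>R v" using greater by (simp add: algebra_simps)
  finally show ?thesis .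
qed

lemma norm_dominated_graph_extend:
  assumes G: "norm_dominated_graph G" and "G \<noteq> {}"
  shows "\<exists>c. norm_dominated_graph {(x + t *\<^sub>R v, r + t * c) | x r t. (x, r) \<in> G}"
proof -
  obtain c where lower: "\<And>x r. (x, r) \<in> G \<Longrightarrow> r - norm (x - v) \<le> c"
    and upper: "\<And>x r. (x, r) \<in> G \<Longrightarrow> c \<le> norm (x + v) - r"
    using norm_dominated_graph_extension_slope[OF assms] by blast
  let ?H = "{(x + t *\<^sub>R v, r + t * c) | x r t. (x, r) \<in> G}"
  have "norm_dominated_graph ?H"
    unfolding norm_dominated_graph_def
  proof (intro conjI allI impI)
    fix x r y s a b
    assume "(x, r) \<in> ?H" "(y, s) \<in> ?H"
    then obtain x1 r1 t1 x2 r2 t2 where G12: "(x1, r1) \<in> G" "(x2, r2) \<in> G"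
      and "x = x1 + t1 *\<^sub>R v" "r = r1 + t1 * c" "y = x2 + t2 *\<^sub>R v" "s = r2 + t2 * c"
      by blast
    then have "a *\<^sub>R x + b *\<^sub>R y = (a *\<^sub>R x1 + b *\<^sub>R x2) + (a * t1 + b * t2) *\<^sub>R v"
      and "a * r + b * s = (a * r1 + b * r2) + (a * t1 + b * t2) * c"
      by (simp_all add: algebra_simps)
    with norm_dominated_graph_lincomb[OF G G12] show "(a *\<^sub>R x + b *\<^sub>R y, a * r + b * s) \<in> ?H"
      by blast
  next
    fix x r
    assume "(x, r) \<in> ?H"
    then show "r \<le> norm x" using extension_by_slope_le_norm[OF G _ lower upper] by blast
  qed
  then show ?thesis by blast
qed

lemma norm_dominated_graph_Union_chain:
  assumes graphs: "\<And>X. X \<in> C \<Longrightarrow> norm_dominated_graph X"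
    and chain: "\<And>X Y. X \<in> C \<Longrightarrow> Y \<in> C \<Longrightarrow> X \<subseteq> Y \<or> Y \<subseteq> X"
  shows "norm_dominated_graph (\<Union>C)"
  unfolding norm_dominated_graph_def
proof (intro conjI allI impI)
  fix x r y s a b
  assume "(x, r) \<in> \<Union>C" "(y, s) \<in> \<Union>C"
  then obtain X Y where "X \<in> C" "Y \<in> C" "(x, r) \<in> X" "(y, s) \<in> Y" by blast
  moreover from chain[OF \<open>X \<in> C\<close> \<open>Y \<in> C\<close>] have "X \<subseteq> Y \<or> Y \<subseteq> X" .
  ultimately obtain Z where Z: "Z \<in> C" "(x, r) \<in> Z" "(y, s) \<in> Z" by blast
  then have "(a *\<^sub>R x + b *\<^sub>R y, a * r + b * s) \<in> Z"
    using norm_dominated_graph_lincomb[OF graphs[OF \<open>Z \<in> C\<close>]] by blast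
  then show "(a *\<^sub>R x + b *\<^sub>R y, a * r + b * s) \<in> \<Union>C" using \<open>Z \<in> C\<close> by blast
next
  fix x r
  assume "(x, r) \<in> \<Union>C"
  then obtain X where "X \<in> C" "(x, r) \<in> X" by blast
  then show "r \<le> norm x" using norm_dominated_graph_le[OF graphs] by blast
qed

lemma maximal_norm_dominated_graph:
  assumes "norm_dominated_graph G"
  obtains H where "norm_dominated_graph H" and "G \<subseteq> H"
    and "\<And>X. norm_dominated_graph X \<Longrightarrow> H \<subseteq> X \<Longrightarrow> X = H"
proof -
  define A where "A = {H. norm_dominated_graph H \<and> G \<subseteq> H}"
  have "\<exists>H\<in>A. \<forall>X\<in>A. H \<subseteq> X \<longrightarrow> X = H"
  proof (rule subset_Zorn)
    fix C
    assume "subset.chain A C"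
    then have "C \<subseteq> A" and chain: "\<And>X Y. X \<in> C \<Longrightarrow> Y \<in> C \<Longrightarrow> X \<subseteq> Y \<or> Y \<subseteq> X"
      by (auto simp: subset_chain_def)
    show "\<exists>U\<in>A. \<forall>X\<in>C. X \<subseteq> U"
    proof (cases "C = {}")
      case True
      then show ?thesis using assms unfolding A_def by blast
    next
      case False
      then have "G \<subseteq> \<Union>C" using \<open>C \<subseteq> A\<close> unfolding A_def by blast
      moreover have "norm_dominated_graph (\<Union>C)"
        using \<open>C \<subseteq> A\<close> chain unfolding A_def by (intro norm_dominated_graph_Union_chain) auto
      ultimately show ?thesis unfolding A_def by blast
    qed
  qed
  then obtain H where "H \<in> A" and maximal: "\<forall>X\<in>A. H \<subseteq> X \<longrightarrow> X = H" by blast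
  then have "norm_dominated_graph H" "G \<subseteq> H" unfolding A_def by auto
  moreover have "X = H" if "norm_dominated_graph X" "H \<subseteq> X" for X
    using maximal that \<open>G \<subseteq> H\<close> unfolding A_def by blast
  ultimately show ?thesis by (rule that)
qed

lemma maximal_norm_dominated_graph_total:
  assumes H: "norm_dominated_graph H" and "H \<noteq> {}"
    and maximal: "\<And>X. norm_dominated_graph X \<Longrightarrow> H \<subseteq> X \<Longrightarrow> X = H"
  shows "\<exists>r. (v, r) \<in> H"
proof -
  obtain c where c: "norm_dominated_graph {(x + t *\<^sub>R v, r + t * c) | x r t. (x, r) \<in> H}"
    using norm_dominated_graph_extend[OF H \<open>H \<noteq> {}\<close>] by blast
  let ?H' = "{(x + t *\<^sub>R v, r + t * c) | x r t. (x, r) \<in> H}"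
  have "H \<subseteq> ?H'"
  proof
    fix p
    assume "p \<in> H"
    moreover obtain x r where "p = (x, r)" by (cases p)
    ultimately show "p \<in> ?H'"
      by (intro CollectI exI[of _ x] exI[of _ r] exI[of _ 0]) simp
  qed
  then have "?H' = H" by (rule maximal[OF c])
  obtain x0 r0 where "(x0, r0) \<in> H" using \<open>H \<noteq> {}\<close> by auto
  then have "(0, 0) \<in> H" using norm_dominated_graph_scale[OF H, of x0 r0 0] by simp
  then have "(v, c) \<in> ?H'"
    by (intro CollectI exI[of _ 0] exI[of _ 0] exI[of _ 1]) simp
  then show ?thesis unfolding \<open>?H' = H\<close> by blast
qed

lemma hahn_banach_graph:
  fixes G :: "('a::real_normed_vector \<times> real) set"
  assumes G: "norm_dominated_graph G" and "G \<noteq> {}"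
  shows "\<exists>\<psi>. linear \<psi> \<and> (\<forall>x. \<bar>\<psi> x\<bar> \<le> norm x) \<and> (\<forall>(x, r) \<in> G. \<psi> x = r)"
proof -
  obtain H where H: "norm_dominated_graph H" and "G \<subseteq> H"
    and maximal: "\<And>X. norm_dominated_graph X \<Longrightarrow> H \<subseteq> X \<Longrightarrow> X = H"
    using maximal_norm_dominated_graph[OF G] by blast
  have "H \<noteq> {}" using \<open>G \<noteq> {}\<close> \<open>G \<subseteq> H\<close> by blast
  define \<psi> where "\<psi> x = (THE r. (x, r) \<in> H)" for x
  have \<psi>_eq: "\<psi> x = r" if xr: "(x, r) \<in> H" for x r
    unfolding \<psi>_def
  proof (rule the_equality)
    show "(x, r) \<in> H" by (fact xr)
    show "s = r" if "(x, s) \<in> H" for s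
      using norm_dominated_graph_unique[OF H that xr] .
  qed
  have graph: "(x, \<psi> x) \<in> H" for x
    using maximal_norm_dominated_graph_total[OF H \<open>H \<noteq> {}\<close> maximal, of x] \<psi>_eq by blast
  have "linear \<psi>"
  proof (rule linearI)
    show "\<psi> (x + y) = \<psi> x + \<psi> y" for x y
      by (rule \<psi>_eq, rule norm_dominated_graph_add[OF H graph graph])
    show "\<psi> (a *\<^sub>R x) = a *\<^sub>R \<psi> x" for a x
      using \<psi>_eq[OF norm_dominated_graph_scale[OF H graph]] by simp
  qed
  moreover have "\<bar>\<psi> x\<bar> \<le> norm x" for x
    using norm_dominated_graph_le[OF H graph, of x] norm_dominated_graph_le[OF H graph, of "- x"]
      linear_neg[OF \<open>linear \<psi>\<close>, of x] by simp
  moreover have "\<forall>(x, r) \<in> G. \<psi> x = r" using \<psi>_eq \<open>G \<subseteq> H\<close> by auto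
  ultimately show ?thesis by blast
qed

text \<open>The functional \<open>w + t v \<mapsto> t \<cdot> infdist v L\<close> on \<open>L + \<real> v\<close> is dominated by the norm
  exactly because \<open>infdist v L\<close> is a distance to the subspace \<open>L\<close>.\<close>

lemma norm_dominated_graph_infdist:
  assumes L: "subspace L"
  shows "norm_dominated_graph {(w + t *\<^sub>R v, t * infdist v L) | w t. w \<in> L}"
    (is "norm_dominated_graph ?G")
  unfolding norm_dominated_graph_def
proof (intro conjI allI impI)
  fix x r y s a b
  assume "(x, r) \<in> ?G" "(y, s) \<in> ?G"
  then obtain w1 t1 w2 t2 where "w1 \<in> L" "w2 \<in> L" and "x = w1 + t1 *\<^sub>R v" "r = t1 * infdist v L"
    and "y = w2 + t2 *\<^sub>R v" "s = t2 * infdist v L"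
    by blast
  moreover have "a *\<^sub>R w1 + b *\<^sub>R w2 \<in> L"
    using L \<open>w1 \<in> L\<close> \<open>w2 \<in> L\<close> by (simp add: subspace_add subspace_scale)
  ultimately show "(a *\<^sub>R x + b *\<^sub>R y, a * r + b * s) \<in> ?G"
    by (intro CollectI exI[of _ "a *\<^sub>R w1 + b *\<^sub>R w2"] exI[of _ "a * t1 + b * t2"])
      (simp add: algebra_simps)
next
  fix x r
  assume "(x, r) \<in> ?G"
  then obtain w t where "w \<in> L" and x: "x = w + t *\<^sub>R v" and r: "r = t * infdist v L"
    by blast
  show "r \<le> norm x"
  proof (cases "t > 0")
    case True
    have "infdist v L \<le> dist v ((- 1 / t) *\<^sub>R w)"
      using L \<open>w \<in> L\<close> by (intro infdist_le subspace_scale)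
    then have "t * infdist v L \<le> t * norm (v + (1 / t) *\<^sub>R w)"
      using True by (simp add: dist_norm)
    also have "\<dots> = norm (t *\<^sub>R (v + (1 / t) *\<^sub>R w))" using True by simp
    also have "t *\<^sub>R (v + (1 / t) *\<^sub>R w) = x" using True x by (simp add: algebra_simps)
    finally show ?thesis using r by simp
  next
    case False
    then have "t * infdist v L \<le> 0"
      using infdist_nonneg[of v L] by (simp add: mult_nonpos_nonneg)
    then show ?thesis using r norm_ge_zero[of x] by linarith
  qed
qed

lemma hahn_banach_infdist:
  fixes L :: "'a::real_normed_vector set"
  assumes L: "subspace L"
  shows "\<exists>\<psi>. linear \<psi> \<and> (\<forall>x. \<bar>\<psi> x\<bar> \<le> norm x) \<and> (\<forall>w\<in>L. \<psi> w = 0) \<and> \<psi> v = infdist v L"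
proof -
  let ?G = "{(w + t *\<^sub>R v, t * infdist v L) | w t. w \<in> L}"
  have "(0 + 0 *\<^sub>R v, 0 * infdist v L) \<in> ?G" using subspace_0[OF L] by blast
  then obtain \<psi> where "linear \<psi>" "\<forall>x. \<bar>\<psi> x\<bar> \<le> norm x" and \<psi>: "\<forall>(x, r) \<in> ?G. \<psi> x = r"
    using hahn_banach_graph[OF norm_dominated_graph_infdist[OF L]] by blast
  moreover have "\<psi> w = 0" if "w \<in> L" for w
  proof -
    have "(w + 0 *\<^sub>R v, 0 * infdist v L) \<in> ?G" using that by blast
    then show ?thesis using \<psi> by auto
  qed
  moreover have "\<psi> v = infdist v L"
  proof -
    have "(0 + 1 *\<^sub>R v, 1 * infdist v L) \<in> ?G" using subspace_0[OF L] by blast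
    then show ?thesis using \<psi> by auto
  qed
  ultimately show ?thesis by blast
qed

section \<open>Strongly measurable functions\<close>

lemma strongly_measurable_imp_borel_measurable:
  assumes "strongly_measurable M f"
  shows "f \<in> borel_measurable M"
proof -
  obtain s where s: "\<And>n. simple_function M (s n)" "\<And>x. x \<in> space M \<Longrightarrow> (\<lambda>n. s n x) \<longlonglongrightarrow> f x"
    using assms unfolding strongly_measurable_def by blast
  show ?thesis
    by (rule borel_measurable_LIMSEQ_metric[of s]) (simp_all add: borel_measurable_simple_function s)
qed

lemma strongly_measurable_compose:
  assumes "strongly_measurable M f" and "\<And>y. isCont h y"
  shows "strongly_measurable M (\<lambda>x. h (f x))"
proof -
  obtain s where "\<And>n. simple_function M (s n)" "\<And>x. x \<in> space M \<Longrightarrow> (\<lambda>n. s n x) \<longlonglongrightarrow> f x"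
    using assms(1) unfolding strongly_measurable_def by blast
  then show ?thesis
    unfolding strongly_measurable_def using assms(2)
    by (intro exI[of _ "\<lambda>n x. h (s n x)"]) (auto intro: simple_function_compose1 isCont_tendsto_compose)
qed

lemma strongly_measurable_add:
  assumes "strongly_measurable M f" and "strongly_measurable M g"
  shows "strongly_measurable M (\<lambda>x. f x + g x)"
proof -
  obtain s where "\<And>n. simple_function M (s n)" "\<And>x. x \<in> space M \<Longrightarrow> (\<lambda>n. s n x) \<longlonglongrightarrow> f x"
    using assms(1) unfolding strongly_measurable_def by blast
  moreover obtain s' where "\<And>n. simple_function M (s' n)" "\<And>x. x \<in> space M \<Longrightarrow> (\<lambda>n. s' n x) \<longlonglongrightarrow> g x"
    using assms(2) unfolding strongly_measurable_def by blast
  ultimately show ?thesis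
    unfolding strongly_measurable_def
    by (intro exI[of _ "\<lambda>n x. s n x + s' n x"]) (auto intro: simple_function_compose2 tendsto_add)
qed

lemma borel_measurable_norm_strongly_measurable:
  "strongly_measurable M f \<Longrightarrow> (\<lambda>x. norm (f x)) \<in> borel_measurable M"
  by (rule measurable_compose[OF strongly_measurable_imp_borel_measurable borel_measurable_norm])

lemma strongly_measurable_separably_valued:
  assumes "strongly_measurable M f"
  obtains D where "countable D" and "f ` space M \<subseteq> closure D"
proof -
  obtain s where s: "\<And>n. simple_function M (s n)" "\<And>x. x \<in> space M \<Longrightarrow> (\<lambda>n. s n x) \<longlonglongrightarrow> f x"
    using assms unfolding strongly_measurable_def by blast
  show ?thesis
  proof
    show "countable (\<Union>n. s n ` space M)"
      using countable_finite[OF simple_functionD(1)[OF s(1)]] by blast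
    show "f ` space M \<subseteq> closure (\<Union>n. s n ` space M)"
    proof
      fix y
      assume "y \<in> f ` space M"
      then obtain x where "x \<in> space M" "y = f x" by blast
      then show "y \<in> closure (\<Union>n. s n ` space M)"
        unfolding closure_sequential using s(2) by (intro exI[of _ "\<lambda>n. s n x"]) auto
    qed
  qed
qed

lemma countable_witnesses:
  assumes "countable I" and "\<And>i. i \<in> I \<Longrightarrow> \<exists>w\<in>W. P i w"
  shows "\<exists>C. countable C \<and> C \<subseteq> W \<and> (\<forall>i\<in>I. \<exists>w\<in>C. P i w)"
proof (intro exI conjI)
  let ?w = "\<lambda>i. SOME w. w \<in> W \<and> P i w"
  have w: "?w i \<in> W \<and> P i (?w i)" if "i \<in> I" for i
    using someI_ex[of "\<lambda>w. w \<in> W \<and> P i w"] assms(2)[OF that] by blast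
  show "countable (?w ` I)" using assms(1) by simp
  show "?w ` I \<subseteq> W" using w by blast
  show "\<forall>i\<in>I. \<exists>w\<in>?w ` I. P i w" using w by blast
qed

lemma infdist_lessE:
  assumes "A \<noteq> {}" and "infdist x A < d"
  obtains a where "a \<in> A" and "dist x a < d"
  using assms cInf_less_iff[of "dist x ` A" d] unfolding infdist_notempty[OF assms(1)]
  by (auto intro: bdd_belowI[of _ 0])

section \<open>Isometric scalar actions\<close>

text \<open>This covers both \<open>scaleR\<close> and a complex scaling in the sense of
  \<open>complex_scaling\<close>, so the pointwise and almost-everywhere arguments are done once.\<close>

locale normed_scalar_action =
  fixes scale :: "'k::{real_normed_field, banach} \<Rightarrow> 'a::real_normed_vector \<Rightarrow> 'a"
  assumes norm_scale: "norm (scale c x) = norm c * norm x"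
    and scale_diff_right: "scale c (x - y) = scale c x - scale c y"
    and scale_diff_left: "scale (a - b) x = scale a x - scale b x"
begin

lemma scale_zero_left [simp]: "scale 0 x = 0"
  using norm_scale[of 0 x] by simp

lemma scale_zero_right [simp]: "scale c 0 = 0"
  using norm_scale[of c 0] by simp

definition line :: "'a \<Rightarrow> 'a set" where
  "line u = range (\<lambda>t. scale t u)"

lemma line_zero [simp]: "line 0 = {0}"
  by (auto simp: line_def)

definition contractive_functional :: "('a \<Rightarrow> 'k) \<Rightarrow> bool" where
  "contractive_functional \<phi> \<longleftrightarrow>
     (\<forall>x y. \<phi> (x + y) = \<phi> x + \<phi> y) \<and> (\<forall>c x. \<phi> (scale c x) = c * \<phi> x) \<and> (\<forall>x. norm (\<phi> x) \<le> norm x)"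

lemma contractive_functional_diff:
  assumes "contractive_functional \<phi>"
  shows "\<phi> (x - y) = \<phi> x - \<phi> y"
proof -
  have "\<phi> (x - y + y) = \<phi> (x - y) + \<phi> y"
    using assms unfolding contractive_functional_def by blast
  then show ?thesis by (simp add: eq_diff_eq)
qed

lemma contractive_functional_zero:
  "contractive_functional \<phi> \<Longrightarrow> \<phi> 0 = 0"
  using contractive_functional_diff[of \<phi> 0 0] by simp

lemma contractive_functional_scale:
  "contractive_functional \<phi> \<Longrightarrow> \<phi> (scale c x) = c * \<phi> x"
  by (simp add: contractive_functional_def)

lemma contractive_functional_norm_le:
  assumes "contractive_functional \<phi>"
  shows "norm (\<phi> x) \<le> norm (\<phi> y) + norm (x - y)"
proof -
  have "norm (\<phi> x) \<le> norm (\<phi> y) + norm (\<phi> x - \<phi> y)" by (rule norm_triangle_sub)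
  also have "\<phi> x - \<phi> y = \<phi> (x - y)"
    using assms by (rule contractive_functional_diff[symmetric])
  also have "norm \<dots> \<le> norm (x - y)"
    using assms unfolding contractive_functional_def by blast
  finally show ?thesis by simp
qed

lemma convergent_of_tendsto_scale:
  assumes "y \<noteq> 0" and lim: "(\<lambda>n. scale (t n) y) \<longlonglongrightarrow> l"
  shows "convergent t"
  unfolding Cauchy_convergent_iff[symmetric] Cauchy_iff
proof (intro allI impI)
  fix e :: real
  assume "e > 0"
  then have "e * norm y > 0" using assms(1) by simp
  then obtain N where N: "\<forall>m\<ge>N. \<forall>n\<ge>N. norm (scale (t m) y - scale (t n) y) < e * norm y"
    using LIMSEQ_imp_Cauchy[OF lim] unfolding Cauchy_iff by blast
  have "norm (t m - t n) < e" if "m \<ge> N" "n \<ge> N" for m n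
  proof -
    have "norm (t m - t n) * norm y < e * norm y"
      using N that by (simp add: scale_diff_left[symmetric] norm_scale)
    then show ?thesis using assms(1) by simp
  qed
  then show "\<exists>N. \<forall>m\<ge>N. \<forall>n\<ge>N. norm (t m - t n) < e" by blast
qed

lemma closed_line: "closed (line y)"
proof (cases "y = 0")
  case True
  then show ?thesis by simp
next
  case False
  show ?thesis
    unfolding closed_sequential_limits
  proof (intro allI impI, elim conjE)
    fix z l
    assume "\<forall>n. z n \<in> line y" and "z \<longlonglongrightarrow> l"
    moreover have "\<forall>n. \<exists>s. z n = scale s y"
      using \<open>\<forall>n. z n \<in> line y\<close> unfolding line_def by blast
    then obtain t where "\<forall>n. z n = scale (t n) y" by metis
    then have "z = (\<lambda>n. scale (t n) y)" by auto
    ultimately have lim: "(\<lambda>n. scale (t n) y) \<longlonglongrightarrow> l" by simp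
    then obtain s where "t \<longlonglongrightarrow> s"
      using convergent_of_tendsto_scale[OF False] unfolding convergent_def by blast
    then have "(\<lambda>n. norm (t n - s) * norm y) \<longlonglongrightarrow> 0"
      by (intro tendsto_mult_left_zero tendsto_norm_zero LIM_zero)
    then have "(\<lambda>n. norm (scale (t n) y - scale s y)) \<longlonglongrightarrow> 0"
      by (simp add: scale_diff_left[symmetric] norm_scale)
    then have "(\<lambda>n. scale (t n) y) \<longlonglongrightarrow> scale s y"
      by (simp only: tendsto_norm_zero_iff LIM_zero_iff)
    with lim show "l \<in> line y"
      unfolding line_def using LIMSEQ_unique by blast
  qed
qed

lemma tendsto_scale_in_line:
  assumes U: "U \<longlonglongrightarrow> y" and "y \<noteq> 0" and lim: "(\<lambda>n. scale (T n) (U n)) \<longlonglongrightarrow> z"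
  shows "z \<in> line y"
proof -
  have "\<forall>\<^sub>F n in sequentially. norm (scale (T n) (U n)) / norm (U n) = norm (T n)"
    using tendsto_imp_eventually_ne[OF U \<open>y \<noteq> 0\<close>] by eventually_elim (simp add: norm_scale)
  moreover have "(\<lambda>n. norm (scale (T n) (U n)) / norm (U n)) \<longlonglongrightarrow> norm z / norm y"
    using \<open>y \<noteq> 0\<close> by (intro tendsto_intros lim U) simp
  ultimately have "(\<lambda>n. norm (T n)) \<longlonglongrightarrow> norm z / norm y"
    by (rule Lim_transform_eventually[rotated])
  moreover have "(\<lambda>n. norm (y - U n)) \<longlonglongrightarrow> 0"
    using tendsto_norm[OF tendsto_diff[OF tendsto_const[of y] U]] by simp
  ultimately have "(\<lambda>n. norm (T n) * norm (y - U n)) \<longlonglongrightarrow> norm z / norm y * 0"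
    by (rule tendsto_mult)
  then have "(\<lambda>n. norm (scale (T n) y - scale (T n) (U n))) \<longlonglongrightarrow> 0"
    by (simp add: scale_diff_right[symmetric] norm_scale)
  then have "(\<lambda>n. scale (T n) y - scale (T n) (U n)) \<longlonglongrightarrow> 0"
    by (simp only: tendsto_norm_zero_iff)
  then have "(\<lambda>n. scale (T n) y) \<longlonglongrightarrow> z"
    using tendsto_add[OF _ lim] by fastforce
  then show ?thesis
    by (rule closed_sequentially[OF closed_line, rotated]) (simp add: line_def)
qed

lemma limit_in_line_of_infdist_tendsto_0:
  assumes U: "U \<longlonglongrightarrow> y" and "y \<noteq> 0" and V: "V \<longlonglongrightarrow> z"
    and infdist_0: "(\<lambda>n. infdist (V n) (line (U n))) \<longlonglongrightarrow> 0"
  shows "z \<in> line y"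
proof -
  have "\<forall>n. \<exists>t. dist (V n) (scale t (U n)) < infdist (V n) (line (U n)) + inverse (real (Suc n))"
  proof
    fix n
    have "line (U n) \<noteq> {}" by (simp add: line_def)
    moreover have "infdist (V n) (line (U n)) < infdist (V n) (line (U n)) + inverse (real (Suc n))"
      by simp
    ultimately obtain a where "a \<in> line (U n)"
      and "dist (V n) a < infdist (V n) (line (U n)) + inverse (real (Suc n))"
      by (rule infdist_lessE)
    then show "\<exists>t. dist (V n) (scale t (U n)) < infdist (V n) (line (U n)) + inverse (real (Suc n))"
      unfolding line_def by blast
  qed
  then obtain T where T:
    "\<forall>n. dist (V n) (scale (T n) (U n)) < infdist (V n) (line (U n)) + inverse (real (Suc n))"
    by metis
  have "(\<lambda>n. V n - scale (T n) (U n)) \<longlonglongrightarrow> 0"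
  proof (rule Lim_null_comparison)
    show "\<forall>\<^sub>F n in sequentially.
        norm (V n - scale (T n) (U n)) \<le> infdist (V n) (line (U n)) + inverse (real (Suc n))"
      using T by (intro always_eventually allI) (simp add: dist_norm less_imp_le)
    show "(\<lambda>n. infdist (V n) (line (U n)) + inverse (real (Suc n))) \<longlonglongrightarrow> 0"
      using tendsto_add[OF infdist_0 LIMSEQ_inverse_real_of_nat] by simp
  qed
  from tendsto_diff[OF V this] have "(\<lambda>n. scale (T n) (U n)) \<longlonglongrightarrow> z"
    by simp
  then show ?thesis
    using tendsto_scale_in_line[OF U \<open>y \<noteq> 0\<close>] by blast
qed

context
  fixes \<Phi> :: "('a \<Rightarrow> 'k) set" and D :: "'a set"
  assumes contractive: "\<And>\<phi>. \<phi> \<in> \<Phi> \<Longrightarrow> contractive_functional \<phi>"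
    and separating:
      "\<And>u v. u \<in> D \<Longrightarrow> v \<in> D \<Longrightarrow> \<exists>\<phi>\<in>\<Phi>. \<phi> u = 0 \<and> infdist v (line u) \<le> norm (\<phi> v)"
    and zero_in_D: "0 \<in> D"
begin

lemma norming_functional:
  assumes "y \<in> closure D" and "e > 0"
  obtains \<phi> where "\<phi> \<in> \<Phi>" and "norm y \<le> norm (\<phi> y) + e"
proof -
  obtain v where "v \<in> D" and "dist v y < e / 2"
    using assms unfolding closure_approachable by (meson half_gt_zero)
  obtain \<phi> where "\<phi> \<in> \<Phi>" and "norm v \<le> norm (\<phi> v)"
    using separating[OF zero_in_D \<open>v \<in> D\<close>] by (auto simp: dist_norm)
  have "norm y \<le> norm v + norm (y - v)" by (rule norm_triangle_sub)
  also have "norm v \<le> norm (\<phi> y) + norm (v - y)"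
    using \<open>norm v \<le> norm (\<phi> v)\<close> contractive_functional_norm_le[OF contractive[OF \<open>\<phi> \<in> \<Phi>\<close>]]
    by (rule order_trans)
  finally have "norm y \<le> norm (\<phi> y) + 2 * dist v y"
    by (simp add: dist_norm norm_minus_commute)
  then show ?thesis
    using that[OF \<open>\<phi> \<in> \<Phi>\<close>] \<open>dist v y < e / 2\<close> by simp
qed

lemma dominated_in_line:
  assumes y1: "y1 \<in> closure D" and y2: "y2 \<in> closure D" and "y1 \<noteq> 0"
    and dominated: "\<And>\<phi>. \<phi> \<in> \<Phi> \<Longrightarrow> norm (\<phi> y2) \<le> norm (\<phi> y1)"
  shows "y2 \<in> line y1"
proof -
  obtain U where U: "\<And>n. U n \<in> D" "U \<longlonglongrightarrow> y1"
    using y1 unfolding closure_sequential by blast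
  obtain V where V: "\<And>n. V n \<in> D" "V \<longlonglongrightarrow> y2"
    using y2 unfolding closure_sequential by blast
  have "\<forall>n. \<exists>\<phi>. \<phi> \<in> \<Phi> \<and> \<phi> (U n) = 0 \<and> infdist (V n) (line (U n)) \<le> norm (\<phi> (V n))"
    using separating[OF U(1) V(1)] by blast
  then obtain P where "\<forall>n. P n \<in> \<Phi> \<and> P n (U n) = 0 \<and> infdist (V n) (line (U n)) \<le> norm (P n (V n))"
    by metis
  then have P: "\<And>n. P n \<in> \<Phi>" "\<And>n. P n (U n) = 0"
    "\<And>n. infdist (V n) (line (U n)) \<le> norm (P n (V n))"
    by simp_all
  txt \<open>\<open>P n\<close> vanishes at \<open>U n \<approx> y1\<close>, so it is small at \<open>y1\<close>, hence by domination at \<open>y2\<close>, hence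
    at \<open>V n \<approx> y2\<close>; thus \<open>V n\<close> is close to the line through \<open>U n\<close>.\<close>
  have infdist_bound: "infdist (V n) (line (U n)) \<le> norm (U n - y1) + norm (V n - y2)" for n
  proof -
    note le = contractive_functional_norm_le[OF contractive[OF P(1)]]
    have "norm (P n (V n)) \<le> norm (P n y2) + norm (V n - y2)" by (rule le)
    also have "norm (P n y2) \<le> norm (P n y1)" by (rule dominated[OF P(1)])
    also have "norm (P n y1) \<le> norm (P n (U n)) + norm (y1 - U n)" by (rule le)
    finally show ?thesis using P(2,3)[of n] by (simp add: norm_minus_commute)
  qed
  have "(\<lambda>n. infdist (V n) (line (U n))) \<longlonglongrightarrow> 0"
  proof (rule Lim_null_comparison)
    show "\<forall>\<^sub>F n in sequentially.
        norm (infdist (V n) (line (U n))) \<le> norm (U n - y1) + norm (V n - y2)"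
      using infdist_bound by (intro always_eventually allI) (simp add: infdist_nonneg)
    show "(\<lambda>n. norm (U n - y1) + norm (V n - y2)) \<longlonglongrightarrow> 0"
      using tendsto_add[OF tendsto_norm_zero[OF LIM_zero[OF U(2)]]
          tendsto_norm_zero[OF LIM_zero[OF V(2)]]] by simp
  qed
  then show ?thesis
    by (rule limit_in_line_of_infdist_tendsto_0[OF U(2) \<open>y1 \<noteq> 0\<close> V(2)])
qed

lemma scale_of_dominated:
  assumes y1: "y1 \<in> closure D" and y2: "y2 \<in> closure D"
    and dominated: "\<And>\<phi>. \<phi> \<in> \<Phi> \<Longrightarrow> norm (\<phi> y2) \<le> norm (\<phi> y1)"
  obtains t where "norm t \<le> 1" and "y2 = scale t y1"
proof (cases "y1 = 0")
  case True
  have "norm y2 \<le> 0 + e" if e: "e > 0" for e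
  proof -
    obtain \<phi> where "\<phi> \<in> \<Phi>" and "norm y2 \<le> norm (\<phi> y2) + e"
      using norming_functional[OF y2 e] .
    moreover have "norm (\<phi> y2) \<le> 0"
      using dominated[OF \<open>\<phi> \<in> \<Phi>\<close>] contractive_functional_zero[OF contractive[OF \<open>\<phi> \<in> \<Phi>\<close>]] True
      by simp
    ultimately show ?thesis by simp
  qed
  then have "y2 = 0" using field_le_epsilon[of "norm y2" 0] by simp
  then show ?thesis using True by (intro that[of 0]) simp_all
next
  case False
  then obtain t where t: "y2 = scale t y1"
    using dominated_in_line[OF y1 y2 False dominated] unfolding line_def by blast
  have "norm y1 / 2 > 0" using False by simp
  then obtain \<phi> where "\<phi> \<in> \<Phi>" and "norm y1 \<le> norm (\<phi> y1) + norm y1 / 2"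
    by (rule norming_functional[OF y1])
  then have "norm (\<phi> y1) > 0" using \<open>norm y1 / 2 > 0\<close> by linarith
  moreover have "norm t * norm (\<phi> y1) \<le> norm (\<phi> y1)"
    using dominated[OF \<open>\<phi> \<in> \<Phi>\<close>] contractive_functional_scale[OF contractive[OF \<open>\<phi> \<in> \<Phi>\<close>]] t
    by (simp add: norm_mult)
  ultimately have "norm t \<le> 1" by (simp add: mult_le_cancel_right1)
  then show ?thesis using t that by blast
qed

end

lemma countable_separating_family:
  assumes separating:
      "\<And>u v. \<exists>\<phi>. contractive_functional \<phi> \<and> \<phi> u = 0 \<and> infdist v (line u) \<le> norm (\<phi> v)"
    and "countable D"
  obtains \<Phi> where "countable \<Phi>" and "\<forall>\<phi>\<in>\<Phi>. contractive_functional \<phi>"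
    and "\<forall>u\<in>D. \<forall>v\<in>D. \<exists>\<phi>\<in>\<Phi>. \<phi> u = 0 \<and> infdist v (line u) \<le> norm (\<phi> v)"
proof -
  have "countable (D \<times> D)" using \<open>countable D\<close> by simp
  moreover have "\<exists>\<phi>\<in>Collect contractive_functional.
      \<phi> (fst p) = 0 \<and> infdist (snd p) (line (fst p)) \<le> norm (\<phi> (snd p))" if "p \<in> D \<times> D" for p
    using separating by simp
  ultimately have "\<exists>\<Phi>. countable \<Phi> \<and> \<Phi> \<subseteq> Collect contractive_functional \<and>
      (\<forall>p\<in>D \<times> D. \<exists>\<phi>\<in>\<Phi>. \<phi> (fst p) = 0 \<and> infdist (snd p) (line (fst p)) \<le> norm (\<phi> (snd p)))"
    by (rule countable_witnesses)
  then obtain \<Phi> where "countable \<Phi>" and \<Phi>: "\<Phi> \<subseteq> Collect contractive_functional"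
    and \<Phi>_separating: "\<forall>p\<in>D \<times> D.
      \<exists>\<phi>\<in>\<Phi>. \<phi> (fst p) = 0 \<and> infdist (snd p) (line (fst p)) \<le> norm (\<phi> (snd p))"
    by blast
  show ?thesis
  proof (rule that)
    show "countable \<Phi>" by fact
    show "\<forall>\<phi>\<in>\<Phi>. contractive_functional \<phi>" using \<Phi> by blast
    show "\<forall>u\<in>D. \<forall>v\<in>D. \<exists>\<phi>\<in>\<Phi>. \<phi> u = 0 \<and> infdist v (line u) \<le> norm (\<phi> v)"
      using \<Phi>_separating by auto
  qed
qed

lemma AE_scale_of_dominated:
  assumes separating:
      "\<And>u v. \<exists>\<phi>. contractive_functional \<phi> \<and> \<phi> u = 0 \<and> infdist v (line u) \<le> norm (\<phi> v)"
    and f: "strongly_measurable M f" and g: "strongly_measurable M g"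
    and dominated: "\<And>\<phi>. contractive_functional \<phi> \<Longrightarrow> AE x in M. norm (\<phi> (g x)) \<le> norm (\<phi> (f x))"
  shows "AE x in M. \<exists>t. norm t \<le> 1 \<and> g x = scale t (f x)"
proof -
  obtain Df where "countable Df" and Df: "f ` space M \<subseteq> closure Df"
    using strongly_measurable_separably_valued[OF f] .
  obtain Dg where "countable Dg" and Dg: "g ` space M \<subseteq> closure Dg"
    using strongly_measurable_separably_valued[OF g] .
  define D where "D = insert 0 (Df \<union> Dg)"
  have "countable D" using \<open>countable Df\<close> \<open>countable Dg\<close> by (simp add: D_def)
  obtain \<Phi> where "countable \<Phi>" and \<Phi>_contractive: "\<forall>\<phi>\<in>\<Phi>. contractive_functional \<phi>"
    and \<Phi>_separating: "\<forall>u\<in>D. \<forall>v\<in>D. \<exists>\<phi>\<in>\<Phi>. \<phi> u = 0 \<and> infdist v (line u) \<le> norm (\<phi> v)"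
    by (rule countable_separating_family[OF separating \<open>countable D\<close>])
  have "\<forall>\<phi>\<in>\<Phi>. AE x in M. norm (\<phi> (g x)) \<le> norm (\<phi> (f x))"
    using \<Phi>_contractive dominated by blast
  then have "AE x in M. \<forall>\<phi>\<in>\<Phi>. norm (\<phi> (g x)) \<le> norm (\<phi> (f x))"
    by (simp add: AE_ball_countable[OF \<open>countable \<Phi>\<close>])
  then show ?thesis
  proof (rule AE_mp[OF _ AE_I2], intro impI)
    fix x
    assume "x \<in> space M" and dominated_x: "\<forall>\<phi>\<in>\<Phi>. norm (\<phi> (g x)) \<le> norm (\<phi> (f x))"
    have "closure Df \<subseteq> closure D" "closure Dg \<subseteq> closure D"
      unfolding D_def by (auto intro!: closure_mono)
    then have fx: "f x \<in> closure D" and gx: "g x \<in> closure D"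
      using Df Dg \<open>x \<in> space M\<close> by auto
    have "0 \<in> D" by (simp add: D_def)
    obtain t where "norm t \<le> 1" "g x = scale t (f x)"
      by (rule scale_of_dominated[OF \<Phi>_contractive[rule_format] \<Phi>_separating[rule_format]
            \<open>0 \<in> D\<close> fx gx dominated_x[rule_format]])
    then show "\<exists>t. norm t \<le> 1 \<and> g x = scale t (f x)" by blast
  qed
qed

lemma measurable_scale_of_dominated:
  assumes AE: "AE x in M. \<exists>t. norm t \<le> 1 \<and> g x = scale t (f x)"
    and "c \<in> borel_measurable M"
    and coefficient: "\<And>x t. g x = scale t (f x) \<Longrightarrow> c x = (if f x = 0 then 0 else t)"
  shows "\<exists>c. c \<in> borel_measurable M \<and> (AE x in M. norm (c x) \<le> 1) \<and>
    (AE x in M. g x = scale (c x) (f x))"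
proof (intro exI conjI)
  show "c \<in> borel_measurable M" by fact
  show "AE x in M. norm (c x) \<le> 1"
    using AE
  proof eventually_elim
    case (elim x)
    then obtain t where "norm t \<le> 1" "g x = scale t (f x)" by blast
    then show ?case using coefficient[of x t] by simp
  qed
  show "AE x in M. g x = scale (c x) (f x)"
    using AE
  proof eventually_elim
    case (elim x)
    then obtain t where "g x = scale t (f x)" by blast
    then show ?case using coefficient[of x t] by (cases "f x = 0") simp_all
  qed
qed

end

section \<open>Real and complex scalars\<close>

interpretation real_scaling: normed_scalar_action "scaleR :: real \<Rightarrow> 'a::real_normed_vector \<Rightarrow> 'a"
  by unfold_locales (simp_all add: scaleR_diff_right scaleR_diff_left)

lemma real_scaling_line: "real_scaling.line u = span {u}"
  by (simp add: real_scaling.line_def span_singleton)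

lemma real_separating_functional:
  fixes u v :: "'a::real_normed_vector"
  shows "\<exists>\<phi>. real_scaling.contractive_functional \<phi> \<and> \<phi> u = 0 \<and>
    infdist v (real_scaling.line u) \<le> norm (\<phi> v)"
proof -
  obtain \<psi> where "linear \<psi>" "\<forall>x. \<bar>\<psi> x\<bar> \<le> norm x" "\<forall>w\<in>span {u}. \<psi> w = 0"
    "\<psi> v = infdist v (span {u})"
    using hahn_banach_infdist[OF subspace_span] by blast
  moreover have "real_scaling.contractive_functional \<psi>"
    unfolding real_scaling.contractive_functional_def
    using \<open>linear \<psi>\<close> \<open>\<forall>x. \<bar>\<psi> x\<bar> \<le> norm x\<close> by (simp add: linear_add linear_scale)
  ultimately show ?thesis
    unfolding real_scaling_line by (intro exI[of _ \<psi>]) (simp add: span_base)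
qed

lemma bounded_linear_real_contractive:
  "real_scaling.contractive_functional \<phi> \<Longrightarrow> bounded_linear \<phi>"
  unfolding real_scaling.contractive_functional_def
  by (intro bounded_linear_intro[where K = 1]) auto

lemma scaleR_coefficient_by_norms:
  fixes x :: "'a::real_normed_vector"
  assumes "x \<noteq> 0"
  shows "((norm (x + t *\<^sub>R x))\<^sup>2 - (norm x)\<^sup>2 - (norm (t *\<^sub>R x))\<^sup>2) / (2 * (norm x)\<^sup>2) = t"
proof -
  have "x + t *\<^sub>R x = (1 + t) *\<^sub>R x" by (simp add: algebra_simps)
  then have "(norm (x + t *\<^sub>R x))\<^sup>2 = (1 + t)\<^sup>2 * (norm x)\<^sup>2"
    by (simp add: power_mult_distrib)
  moreover have "(norm (t *\<^sub>R x))\<^sup>2 = t\<^sup>2 * (norm x)\<^sup>2"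
    by (simp add: power_mult_distrib)
  ultimately show ?thesis
    using assms by (simp add: field_simps power2_eq_square)
qed

lemma real_dominated_scalar_multiple:
  fixes f g :: "'s \<Rightarrow> 'a::real_normed_vector"
  assumes f: "strongly_measurable M f" and g: "strongly_measurable M g"
    and dominated: "\<And>\<phi> :: 'a \<Rightarrow> real. bounded_linear \<phi> \<Longrightarrow> AE x in M. \<bar>\<phi> (g x)\<bar> \<le> \<bar>\<phi> (f x)\<bar>"
  shows "\<exists>a :: 's \<Rightarrow> real. a \<in> borel_measurable M \<and> (AE x in M. \<bar>a x\<bar> \<le> 1) \<and>
    (AE x in M. g x = a x *\<^sub>R f x)"
proof -
  txt \<open>Where \<open>f x = 0\<close> the formula divides by zero, which yields \<open>0\<close>.\<close>
  define a where
    "a x = ((norm (f x + g x))\<^sup>2 - (norm (f x))\<^sup>2 - (norm (g x))\<^sup>2) / (2 * (norm (f x))\<^sup>2)" for x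
  have "AE x in M. norm (\<phi> (g x)) \<le> norm (\<phi> (f x))"
    if "real_scaling.contractive_functional \<phi>" for \<phi>
    using dominated[OF bounded_linear_real_contractive[OF that]] by simp
  then have AE: "AE x in M. \<exists>t. norm t \<le> 1 \<and> g x = t *\<^sub>R f x"
    by (rule real_scaling.AE_scale_of_dominated[OF real_separating_functional f g])
  have [measurable]: "(\<lambda>x. norm (f x)) \<in> borel_measurable M"
    "(\<lambda>x. norm (g x)) \<in> borel_measurable M" "(\<lambda>x. norm (f x + g x)) \<in> borel_measurable M"
    using f g strongly_measurable_add[OF f g] by (simp_all add: borel_measurable_norm_strongly_measurable)
  then have "a \<in> borel_measurable M" unfolding a_def by measurable
  moreover have "a x = (if f x = 0 then 0 else t)" if "g x = t *\<^sub>R f x" for x t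
    using that scaleR_coefficient_by_norms[of "f x" t] by (simp add: a_def)
  ultimately show ?thesis
    using real_scaling.measurable_scale_of_dominated[OF AE] by (simp only: real_norm_def)
qed

locale complex_scaling_space =
  fixes cs :: "complex \<Rightarrow> 'a::real_normed_vector \<Rightarrow> 'a"
  assumes complex_scaling: "complex_scaling cs"
begin

lemma cs_of_real: "cs (complex_of_real r) x = r *\<^sub>R x"
  and cs_mult: "cs (a * b) x = cs a (cs b x)"
  and cs_add_left: "cs (a + b) x = cs a x + cs b x"
  and cs_add_right: "cs a (x + y) = cs a x + cs a y"
  and norm_cs: "norm (cs a x) = cmod a * norm x"
  using complex_scaling unfolding complex_scaling_def by blast+

lemma cs_one [simp]: "cs 1 x = x"
  using cs_of_real[of 1 x] by simp

lemma cs_scaleR: "cs a (r *\<^sub>R x) = r *\<^sub>R cs a x"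
  by (metis cs_mult cs_of_real mult.commute)

lemma cs_decompose: "cs c x = Re c *\<^sub>R x + Im c *\<^sub>R cs \<i> x"
proof -
  have "c = complex_of_real (Re c) + complex_of_real (Im c) * \<i>"
    by (simp add: complex_eq_iff)
  then show ?thesis
    by (metis cs_add_left cs_mult cs_of_real)
qed

sublocale normed_scalar_action cs
proof
  show "norm (cs c x) = norm c * norm x" for c x by (rule norm_cs)
  show "cs c (x - y) = cs c x - cs c y" for c x y
    using cs_add_right[of c "x - y" y] by (simp add: eq_diff_eq)
  show "cs (a - b) x = cs a x - cs b x" for a b x
    using cs_add_left[of "a - b" b x] by (simp add: eq_diff_eq)
qed

lemma subspace_line: "subspace (line u)"
  unfolding subspace_def line_def
proof (intro conjI ballI allI)
  show "0 \<in> range (\<lambda>t. cs t u)" by (rule range_eqI[of _ _ 0]) simp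
  show "x + y \<in> range (\<lambda>t. cs t u)" if "x \<in> range (\<lambda>t. cs t u)" "y \<in> range (\<lambda>t. cs t u)" for x y
    using that by (auto simp: cs_add_left[symmetric])
  show "r *\<^sub>R x \<in> range (\<lambda>t. cs t u)" if "x \<in> range (\<lambda>t. cs t u)" for r x
    using that by (auto simp: cs_of_real[symmetric] cs_mult[symmetric])
qed

definition complexification :: "('a \<Rightarrow> real) \<Rightarrow> 'a \<Rightarrow> complex" where
  "complexification \<psi> x = Complex (\<psi> x) (- \<psi> (cs \<i> x))"

lemma complexification_scale:
  assumes "linear \<psi>"
  shows "complexification \<psi> (cs c x) = c * complexification \<psi> x"
proof -
  have "cs \<i> (cs c x) = cs (\<i> * c) x" by (simp add: cs_mult)
  also have "\<dots> = (- Im c) *\<^sub>R x + Re c *\<^sub>R cs \<i> x" by (subst cs_decompose) simp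
  finally have "\<psi> (cs \<i> (cs c x)) = - Im c * \<psi> x + Re c * \<psi> (cs \<i> x)"
    using assms by (simp add: linear_diff linear_add linear_scale)
  moreover have "\<psi> (cs c x) = Re c * \<psi> x + Im c * \<psi> (cs \<i> x)"
    using assms by (subst cs_decompose) (simp add: linear_add linear_scale)
  ultimately show ?thesis
    unfolding complexification_def by (simp add: complex_eq_iff algebra_simps)
qed

lemma norm_complexification_le:
  assumes "linear \<psi>" and bound: "\<And>x. \<bar>\<psi> x\<bar> \<le> norm x"
  shows "cmod (complexification \<psi> x) \<le> norm x"
proof (cases "complexification \<psi> x = 0")
  case False
  let ?z = "complexification \<psi> x"
  txt \<open>Rotating \<open>x\<close> by the phase \<open>c\<close> of \<open>?z\<close> makes the value real.\<close>
  define c where "c = cnj ?z / complex_of_real (cmod ?z)"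
  have "cnj ?z * ?z = complex_of_real (cmod ?z) * complex_of_real (cmod ?z)"
    using complex_norm_square[of ?z] by (simp add: power2_eq_square mult.commute)
  then have "c * ?z = complex_of_real (cmod ?z)"
    using False unfolding c_def by (simp add: field_simps)
  then have "cmod ?z = Re (complexification \<psi> (cs c x))"
    using complexification_scale[OF assms(1)] by simp
  also have "\<dots> = \<psi> (cs c x)" by (simp add: complexification_def)
  also have "\<dots> \<le> norm (cs c x)" using bound abs_le_D1 by blast
  also have "\<dots> = norm x" using False by (simp add: norm_cs c_def norm_divide)
  finally show ?thesis .
qed simp

lemma contractive_complexification:
  assumes "linear \<psi>" and "\<And>x. \<bar>\<psi> x\<bar> \<le> norm x"
  shows "contractive_functional (complexification \<psi>)"
  unfolding contractive_functional_def
proof (intro conjI allI)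
  show "complexification \<psi> (x + y) = complexification \<psi> x + complexification \<psi> y" for x y
    using assms(1) by (simp add: complexification_def cs_add_right linear_add complex_eq_iff)
  show "complexification \<psi> (cs c x) = c * complexification \<psi> x" for c x
    by (rule complexification_scale[OF assms(1)])
  show "norm (complexification \<psi> x) \<le> norm x" for x
    by (rule norm_complexification_le[OF assms])
qed

lemma complex_separating_functional:
  "\<exists>\<phi>. contractive_functional \<phi> \<and> \<phi> u = 0 \<and> infdist v (line u) \<le> norm (\<phi> v)"
proof -
  obtain \<psi> where "linear \<psi>" "\<forall>x. \<bar>\<psi> x\<bar> \<le> norm x" "\<forall>w\<in>line u. \<psi> w = 0"
    "\<psi> v = infdist v (line u)"
    using hahn_banach_infdist[OF subspace_line] by blast
  moreover have "u \<in> line u" unfolding line_def by (metis cs_one rangeI)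
  moreover have "cs \<i> u \<in> line u" unfolding line_def by (rule rangeI)
  ultimately show ?thesis
    using contractive_complexification abs_Re_le_cmod[of "complexification \<psi> v"]
    by (intro exI[of _ "complexification \<psi>"]) (auto simp: complexification_def complex_eq_iff)
qed

lemma complex_dual_contractive:
  assumes "contractive_functional \<phi>"
  shows "complex_dual cs \<phi>"
proof -
  have "\<phi> (r *\<^sub>R x) = r *\<^sub>R \<phi> x" for r x
    using contractive_functional_scale[OF assms, of "complex_of_real r" x]
    by (simp add: cs_of_real scaleR_conv_of_real)
  then have "bounded_linear \<phi>"
    using assms unfolding contractive_functional_def
    by (intro bounded_linear_intro[where K = 1]) auto
  then show ?thesis
    using contractive_functional_scale[OF assms] unfolding complex_dual_def by blast
qed

text \<open>Polarization: \<open>\<bar>1 + t\<bar>\<^sup>2\<close> and \<open>\<bar>1 + i t\<bar>\<^sup>2\<close> determine \<open>Re t\<close> and \<open>Im t\<close>.\<close>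

lemma coefficient_by_norms:
  assumes "x \<noteq> 0"
  shows "Complex (((norm (x + cs t x))\<^sup>2 - (norm x)\<^sup>2 - (norm (cs t x))\<^sup>2) / (2 * (norm x)\<^sup>2))
    (((norm x)\<^sup>2 + (norm (cs t x))\<^sup>2 - (norm (x + cs \<i> (cs t x)))\<^sup>2) / (2 * (norm x)\<^sup>2)) = t"
proof -
  have "x + cs t x = cs (1 + t) x" and "x + cs \<i> (cs t x) = cs (1 + \<i> * t) x"
    by (simp_all add: cs_add_left cs_mult)
  then have "(norm (x + cs t x))\<^sup>2 = ((1 + Re t)\<^sup>2 + (Im t)\<^sup>2) * (norm x)\<^sup>2"
    and "(norm (x + cs \<i> (cs t x)))\<^sup>2 = ((1 - Im t)\<^sup>2 + (Re t)\<^sup>2) * (norm x)\<^sup>2"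
    and "(norm (cs t x))\<^sup>2 = ((Re t)\<^sup>2 + (Im t)\<^sup>2) * (norm x)\<^sup>2"
    by (simp_all add: norm_cs power_mult_distrib cmod_power2)
  then show ?thesis
    using assms by (simp add: complex_eq_iff field_simps power2_eq_square)
qed

lemma complex_dominated_scalar_multiple:
  fixes f g :: "'s \<Rightarrow> 'a"
  assumes f: "strongly_measurable M f" and g: "strongly_measurable M g"
    and dominated: "\<And>\<phi>. complex_dual cs \<phi> \<Longrightarrow> AE x in M. cmod (\<phi> (g x)) \<le> cmod (\<phi> (f x))"
  shows "\<exists>a :: 's \<Rightarrow> complex. a \<in> borel_measurable M \<and> (AE x in M. cmod (a x) \<le> 1) \<and>
    (AE x in M. g x = cs (a x) (f x))"
proof -
  define a where "a x = Complex
    (((norm (f x + g x))\<^sup>2 - (norm (f x))\<^sup>2 - (norm (g x))\<^sup>2) / (2 * (norm (f x))\<^sup>2))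
    (((norm (f x))\<^sup>2 + (norm (g x))\<^sup>2 - (norm (f x + cs \<i> (g x)))\<^sup>2) / (2 * (norm (f x))\<^sup>2))" for x
  have "AE x in M. norm (\<phi> (g x)) \<le> norm (\<phi> (f x))" if "contractive_functional \<phi>" for \<phi>
    using dominated[OF complex_dual_contractive[OF that]] by simp
  then have AE: "AE x in M. \<exists>t. norm t \<le> 1 \<and> g x = cs t (f x)"
    by (rule AE_scale_of_dominated[OF complex_separating_functional f g])
  have "bounded_linear (cs \<i>)"
    by (rule bounded_linear_intro[where K = 1]) (simp_all add: cs_add_right cs_scaleR norm_cs)
  then have "isCont (cs \<i>) y" for y by (rule linear_continuous_at)
  then have "strongly_measurable M (\<lambda>x. f x + cs \<i> (g x))"
    by (rule strongly_measurable_add[OF f strongly_measurable_compose[OF g]])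
  then have [measurable]: "(\<lambda>x. norm (f x)) \<in> borel_measurable M"
    "(\<lambda>x. norm (g x)) \<in> borel_measurable M" "(\<lambda>x. norm (f x + g x)) \<in> borel_measurable M"
    "(\<lambda>x. norm (f x + cs \<i> (g x))) \<in> borel_measurable M"
    using f g strongly_measurable_add[OF f g] by (simp_all add: borel_measurable_norm_strongly_measurable)
  have "a \<in> borel_measurable M"
    unfolding borel_measurable_complex_iff a_def complex.sel by measurable
  moreover have "a x = (if f x = 0 then 0 else t)" if "g x = cs t (f x)" for x t
  proof (cases "f x = 0")
    case True
    then show ?thesis using that by (simp add: a_def complex_eq_iff)
  next
    case False
    then show ?thesis using that coefficient_by_norms[OF False, of t] by (simp add: a_def)
  qed
  ultimately show ?thesis by (rule measurable_scale_of_dominated[OF AE])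
qed

end

theorem mainTheorem3:
  shows
  "(\<forall>(M::'s measure) (f::'s \<Rightarrow> 'a::banach) g.
      strongly_measurable M f \<and> strongly_measurable M g \<and>
      (\<forall>\<phi>::'a \<Rightarrow> real. bounded_linear \<phi> \<longrightarrow>
         (AE x in M. \<bar>\<phi> (g x)\<bar> \<le> \<bar>\<phi> (f x)\<bar>))
      \<longrightarrow> (\<exists>a::'s \<Rightarrow> real. a \<in> borel_measurable M \<and> (AE x in M. \<bar>a x\<bar> \<le> 1) \<and>
             (AE x in M. g x = a x *\<^sub>R f x)))
   \<and>
   (\<forall>(cs::complex \<Rightarrow> 'b::banach \<Rightarrow> 'b) (M::'t measure) (f::'t \<Rightarrow> 'b) g.
      complex_scaling cs \<and>
      strongly_measurable M f \<and> strongly_measurable M g \<and>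
      (\<forall>\<phi>. complex_dual cs \<phi> \<longrightarrow>
         (AE x in M. cmod (\<phi> (g x)) \<le> cmod (\<phi> (f x))))
      \<longrightarrow> (\<exists>a::'t \<Rightarrow> complex. a \<in> borel_measurable M \<and> (AE x in M. cmod (a x) \<le> 1) \<and>
             (AE x in M. g x = cs (a x) (f x))))"
proof (intro conjI allI impI; elim conjE)
  fix M :: "'s measure" and f g :: "'s \<Rightarrow> 'a"
  assume "strongly_measurable M f" "strongly_measurable M g"
    "\<forall>\<phi>::'a \<Rightarrow> real. bounded_linear \<phi> \<longrightarrow> (AE x in M. \<bar>\<phi> (g x)\<bar> \<le> \<bar>\<phi> (f x)\<bar>)"
  then show "\<exists>a::'s \<Rightarrow> real. a \<in> borel_measurable M \<and> (AE x in M. \<bar>a x\<bar> \<le> 1) \<and>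
      (AE x in M. g x = a x *\<^sub>R f x)"
    by (intro real_dominated_scalar_multiple) simp_all
next
  fix cs :: "complex \<Rightarrow> 'b \<Rightarrow> 'b" and M :: "'t measure" and f g :: "'t \<Rightarrow> 'b"
  assume "complex_scaling cs" "strongly_measurable M f" "strongly_measurable M g"
    "\<forall>\<phi>. complex_dual cs \<phi> \<longrightarrow> (AE x in M. cmod (\<phi> (g x)) \<le> cmod (\<phi> (f x)))"
  then interpret complex_scaling_space cs
    by unfold_locales
  show "\<exists>a::'t \<Rightarrow> complex. a \<in> borel_measurable M \<and> (AE x in M. cmod (a x) \<le> 1) \<and>
      (AE x in M. g x = cs (a x) (f x))"
    using \<open>strongly_measurable M f\<close> \<open>strongly_measurable M g\<close> \<open>\<forall>\<phi>. complex_dual cs \<phi> \<longrightarrow> _\<close>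
    by (intro complex_dominated_scalar_multiple) simp_all
qed

end
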